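(* Let $n\ge 118$ be an integer and let $k$ be real with $\frac{n-10}{2}-\sqrt n<k<\frac{n-10}{2}+\sqrt n$. Set $p=1+\frac8k$ and $q=\frac{n-8}{2}$. Then $pJ_1-q_1>0$, where $$-J_1=k(k+2-n)(k+4)(k+6-n)(k+6)(k+8-n)+(k+2)(k+4-n)(k+4)(k+6-n)(k+6)(k+8-n)+k(k+2-n)(k+2)(k+4-n)(k+6)(k+8-n)+k(k+2-n)(k+2)(k+4-n)(k+4)(k+6-n),$$ $$q_1=2\big((q+2)(n-q-4)+q(n-q-2)\big)\,q(q+2-n)(q+2)(q+4-n).$$
   Context: Here $k=\frac{8}{p-1}$ corresponds to the homogeneity degree of solutions of $\Delta^4u=|u|^{p-1}u$; the claim is a purely algebraic inequality in the real variable $k$ and the integer $n$. *)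

theory Defs
  imports Complex_Main
begin

end

theory Submission
  imports Defs
begin

text \<open>Since \<open>p = (k + 8)/k\<close>, it suffices that \<open>(k + 8) J1 - k q1 > 0\<close>. Writing
  \<open>k = (n - 10)/2 + t\<close> with \<open>|t| < \<surd>n\<close>, this polynomial equals
  \<open>n^6/8 + 3/8 n^4 (n - t^2) (n + 2t)\<close> plus monomials \<open>c n^i t^j\<close> with \<open>2i + j \<le> 10\<close>.
  The middle summand is nonnegative, and for \<open>r = \<surd>n \<ge> 10\<close> each monomial is bounded by
  \<open>|c| r^(2i+j) \<le> |c| r^12 / 10^(12-2i-j)\<close>; these weights add up to about \<open>0.109 < 1/8\<close>.
  So the bound already holds for \<open>n \<ge> 100\<close>.\<close>

definition J1 :: "real \<Rightarrow> real \<Rightarrow> real" where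
  "J1 k N = - (k*(k+2-N)*(k+4)*(k+6-N)*(k+6)*(k+8-N)
              + (k+2)*(k+4-N)*(k+4)*(k+6-N)*(k+6)*(k+8-N)
              + k*(k+2-N)*(k+2)*(k+4-N)*(k+6)*(k+8-N)
              + k*(k+2-N)*(k+2)*(k+4-N)*(k+4)*(k+6-N))"

definition q1 :: "real \<Rightarrow> real" where
  "q1 N = (let q = (N - 8) / 2
           in 2 * ((q+2)*(N-q-4) + q*(N-q-2)) * q*(q+2-N)*(q+2)*(q+4-N))"

text \<open>An entry \<open>(c, i, j)\<close> stands for the monomial \<open>c N\<^sup>i t\<^sup>j\<close>.\<close>

definition remainder_coeffs :: "(real \<times> nat \<times> nat) list" where
  "remainder_coeffs =
     [(-108,0,0), (36,0,1), (228,0,2), (-76,0,3), (-132,0,4), (44,0,5), (12,0,6), (-4,0,7),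
      (-1126,1,0), (224,1,1), (-150,1,2), (32,1,3), (-2,1,4), (-2,1,6),
      (-157,2,0), (47,2,1), (-10,2,2), (-2,2,3), (-9,2,4), (3,2,5),
      (351/2,3,0), (-28,3,1), (11,3,2), (3/2,3,4),
      (3/4,4,0), (-9/4,4,1), (9/4,4,2), (-51/8,5,0)]"

lemma expansion_around_centre:
  fixes N t :: real
  defines "k \<equiv> (N - 10) / 2 + t"
  shows "(k+8) * J1 k N - k * q1 N
    = N^6/8 + 3/8 * N^4 * (N - t^2) * (N + 2*t)
      + (\<Sum>(c,i,j)\<leftarrow>remainder_coeffs. c * N^i * t^j)"
proof -
  define H where "H = N / 2"
  have N: "N = 2*H" and k: "k = H - 5 + t" and q: "(2*H - 8) / 2 = H - 4"
    unfolding H_def k_def by simp_all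
  show ?thesis
    unfolding N k J1_def q1_def remainder_coeffs_def Let_def q by simp algebra
qed

lemma abs_monomial_sum_le:
  fixes r t :: real and cs :: "(real \<times> nat \<times> nat) list"
  assumes "0 \<le> r" "\<bar>t\<bar> \<le> r"
  shows "\<bar>\<Sum>(c,i,j)\<leftarrow>cs. c * (r^2)^i * t^j\<bar> \<le> (\<Sum>(c,i,j)\<leftarrow>cs. \<bar>c\<bar> * r^(2*i+j))"
proof (induction cs)
  case Nil
  then show ?case by simp
next
  case (Cons a cs)
  obtain c i j where a: "a = (c,i,j)" by (cases a)
  have "\<bar>c * (r^2)^i * t^j\<bar> = \<bar>c\<bar> * r^(2*i) * \<bar>t\<bar>^j"
    using assms(1) by (simp add: abs_mult power_abs power_mult)
  also have "\<dots> \<le> \<bar>c\<bar> * r^(2*i) * r^j"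
    using assms by (intro mult_left_mono power_mono) auto
  finally have "\<bar>c * (r^2)^i * t^j\<bar> \<le> \<bar>c\<bar> * r^(2*i+j)"
    by (simp add: power_add mult.assoc)
  with Cons show ?case by (simp add: a)
qed

lemma power_sum_le_top_power:
  fixes \<rho> r :: real and cs :: "(real \<times> nat) list"
  assumes "0 < \<rho>" "\<rho> \<le> r" "\<forall>(c,d)\<in>set cs. 0 \<le> c \<and> d \<le> D"
  shows "(\<Sum>(c,d)\<leftarrow>cs. c * r^d) \<le> (\<Sum>(c,d)\<leftarrow>cs. c / \<rho>^(D-d)) * r^D"
  using assms(3)
proof (induction cs)
  case Nil
  then show ?case by simp
next
  case (Cons a cs)
  obtain c d where a: "a = (c,d)" by (cases a)
  have "c * r^d \<le> c / \<rho>^(D-d) * r^D"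
  proof -
    have "\<rho>^(D-d) * r^d \<le> r^(D-d) * r^d"
      using assms by (intro mult_right_mono power_mono) auto
    also have "\<dots> = r^D" using Cons.prems a by (simp flip: power_add)
    finally show ?thesis using Cons.prems a assms(1)
      by (simp add: field_simps mult_left_mono)
  qed
  with Cons show ?case by (simp add: a distrib_right)
qed

lemma remainder_abs_less:
  fixes r t :: real
  assumes "10 \<le> r" "\<bar>t\<bar> \<le> r"
  shows "\<bar>\<Sum>(c,i,j)\<leftarrow>remainder_coeffs. c * (r^2)^i * t^j\<bar> < r^12 / 8"
proof -
  let ?cs = "map (\<lambda>(c,i,j). (\<bar>c\<bar>, 2*i+j)) remainder_coeffs"
  have "\<bar>\<Sum>(c,i,j)\<leftarrow>remainder_coeffs. c * (r^2)^i * t^j\<bar>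
      \<le> (\<Sum>(c,i,j)\<leftarrow>remainder_coeffs. \<bar>c\<bar> * r^(2*i+j))"
    using assms by (intro abs_monomial_sum_le) auto
  also have "\<dots> = (\<Sum>(c,d)\<leftarrow>?cs. c * r^d)"
    by (simp add: split_def comp_def)
  also have "\<dots> \<le> (\<Sum>(c,d)\<leftarrow>?cs. c / 10^(12-d)) * r^12"
    using assms by (intro power_sum_le_top_power) (auto simp: remainder_coeffs_def)
  also have "\<dots> < r^12 / 8"
    using assms by (simp add: remainder_coeffs_def)
  finally show ?thesis .
qed

lemma centred_expansion_pos:
  fixes r t :: real
  assumes r: "10 \<le> r" and t: "\<bar>t\<bar> \<le> r"
  defines "k \<equiv> (r^2 - 10) / 2 + t"
  shows "0 < (k+8) * J1 k (r^2) - k * q1 (r^2)"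
proof -
  have "t^2 \<le> r^2" using power_mono[OF t abs_ge_zero, of 2] by simp
  moreover have "0 \<le> r^2 + 2*t"
  proof -
    have "10 * r \<le> r * r" using r by (intro mult_right_mono) auto
    then show ?thesis using r t unfolding power2_eq_square abs_le_iff by linarith
  qed
  ultimately have "0 \<le> 3/8 * (r^2)^4 * (r^2 - t^2) * (r^2 + 2*t)" by simp
  moreover have "(r^2)^6 = r^12" by (simp flip: power_mult)
  moreover note remainder_abs_less[OF r t]
  ultimately show ?thesis
    unfolding k_def expansion_around_centre by linarith
qed

theorem lemma8p2:
  fixes n :: nat and k :: real
  assumes hn: "n \<ge> 118"
    and hk1: "(real n - 10) / 2 - sqrt (real n) < k"
    and hk2: "k < (real n - 10) / 2 + sqrt (real n)"
  shows "let N = real n; p = 1 + 8 / k; q = (N - 8) / 2;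
             J1 = - (k*(k+2-N)*(k+4)*(k+6-N)*(k+6)*(k+8-N)
                   + (k+2)*(k+4-N)*(k+4)*(k+6-N)*(k+6)*(k+8-N)
                   + k*(k+2-N)*(k+2)*(k+4-N)*(k+6)*(k+8-N)
                   + k*(k+2-N)*(k+2)*(k+4-N)*(k+4)*(k+6-N));
             q1 = 2 * ((q+2)*(N-q-4) + q*(N-q-2)) * q*(q+2-N)*(q+2)*(q+4-N)
         in p * J1 - q1 > 0"
proof -
  define N where "N = real n"
  define r where "r = sqrt N"
  define t where "t = k - (N - 10) / 2"
  have r: "10 \<le> r" using hn unfolding r_def N_def by (intro real_le_rsqrt) simp
  have N: "N = r^2" unfolding r_def N_def by simp
  have t: "\<bar>t\<bar> \<le> r" using hk1 hk2 unfolding t_def r_def N_def by auto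
  have k: "k = (r^2 - 10) / 2 + t" unfolding t_def N by simp
  have "2 * k = r * r - 10 + 2 * t" unfolding k by (simp add: power2_eq_square)
  moreover have "10 * r \<le> r * r" using r by (intro mult_right_mono) auto
  ultimately have "0 < k" using r t abs_ge_minus_self[of t] by linarith
  moreover have "0 < (k+8) * J1 k N - k * q1 N"
    using centred_expansion_pos[OF r t] unfolding k N .
  ultimately have "0 < ((k+8) * J1 k N - k * q1 N) / k" by simp
  also have "\<dots> = (1 + 8/k) * J1 k N - q1 N"
    using \<open>0 < k\<close> by (simp add: field_simps)
  finally show ?thesis unfolding J1_def q1_def Let_def N_def .
qed

end
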